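(* Let $\lambda>0$, $A\in\mathbb{R}^{m\times n}$ with $m<n$ and $\dim\ker A=n-m$, $b\in\mathbb{R}^m$, let $q=q_1-q_2:\mathbb{R}^m\to[0,+\infty)$ where $q_1:\mathbb{R}^m\to\mathbb{R}$ is continuously differentiable with Lipschitz continuous gradient and $q_2:\mathbb{R}^m\to\mathbb{R}$ is convex and continuous, and let $\mathcal{X}\subseteq\mathbb{R}^n$ be a closed hyperrectangle (possibly unbounded) with $0\in\mathcal{X}$. Set $\Phi(x):=\lambda\frac{\|x\|_1^2}{\|x\|_2^2}+q(Ax-b)$ for $x\neq0$, $\nu^\star:=\inf\{\Phi(x):x\in\mathcal{X}\setminus\{0\}\}$, and assume $\nu^\star<\lambda+q(-b)$. Then the set of optimal solutions $\{x\in\mathcal{X}\setminus\{0\}:\Phi(x)=\nu^\star\}$ is nonempty if one of the following holds: (i) $\mathcal{X}$ is bounded; (ii) $q$ is coercive, $\ker A$ has the $s$-spherical section property for some $s>0$, and there exists $\widetilde{x}\in\mathbb{R}^n$ with $0\neq\widetilde{x}\in\arg\min_{x\in\mathcal{X}}q(Ax-b)$ and $\|\widetilde{x}\|_0<m/s$.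
   Context: A closed hyperrectangle is a set $\{x\in\mathbb{R}^n:\underline{x}\le x\le\overline{x}\}$ with $\underline{x}\in(\mathbb{R}\cup\{-\infty\})^n$, $\overline{x}\in(\mathbb{R}\cup\{+\infty\})^n$. $\|x\|_0$ is the number of nonzero entries of $x$. For positive integers $m<n$, an $(n-m)$-dimensional subspace $V\subseteq\mathbb{R}^n$ has the $s$-spherical section property if $\inf_{v\in V\setminus\{0\}}\|v\|_1/\|v\|_2\ge\sqrt{m/s}$. The inequality $\nu^\star<\lambda+q(-b)$ is a standing assumption of the paper. *)

theory Defs
  imports "HOL-Analysis.Analysis" "HOL-Library.Extended_Real"
begin

definition closed_hyperrectangle :: "(real^'n) set \<Rightarrow> bool" where
  "closed_hyperrectangle X \<longleftrightarrow>
     (\<exists>lo hi :: 'n \<Rightarrow> ereal. (\<forall>i. lo i \<noteq> \<infinity> \<and> hi i \<noteq> -\<infinity>) \<and>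
        X = {x. \<forall>i. lo i \<le> ereal (x$i) \<and> ereal (x$i) \<le> hi i})"

definition norm1 :: "real^'n \<Rightarrow> real" where
  "norm1 x = (\<Sum>i\<in>UNIV. \<bar>x$i\<bar>)"

definition norm0 :: "real^'n \<Rightarrow> nat" where
  "norm0 x = card {i. x$i \<noteq> 0}"

definition spherical_section_property :: "nat \<Rightarrow> real \<Rightarrow> (real^'n) set \<Rightarrow> bool" where
  "spherical_section_property m s V \<longleftrightarrow>
     subspace V \<and> dim V = CARD('n) - m \<and>
     (INF v\<in>V - {0}. ereal (norm1 v / norm v)) \<ge> ereal (sqrt (real m / s))"

end

theory Submission
  imports Defs
begin

text \<open>
  Since \<open>\<parallel>x\<parallel>\<^sub>1 \<ge> \<parallel>x\<parallel>\<^sub>2\<close>, we have \<open>\<Phi>(x) \<ge> \<lambda> + q(Ax - b)\<close>; the right-hand side is continuous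
  with value \<open>\<lambda> + q(-b) > \<nu>\<^sup>\<star>\<close> at the origin. Hence a sublevel set of \<open>\<Phi>\<close> below that value
  avoids a ball around the origin, off which \<open>\<Phi>\<close> is continuous, and a minimiser exists as
  soon as such a sublevel set is bounded. In case (ii),
  Cauchy-Schwarz gives \<open>\<Phi>(x\<^sup>~) < \<lambda>m/s + min q\<close>, and every sublevel set below this level is
  bounded: on it \<open>q(Ax - b)\<close> is bounded, so \<open>\<parallel>Ax\<parallel>\<close> is bounded by coercivity, while the
  directions \<open>x/\<parallel>x\<parallel>\<close> have \<open>\<ell>\<^sub>1/\<ell>\<^sub>2\<close> ratio uniformly below \<open>\<surd>(m/s)\<close>; by the spherical section
  property and compactness, \<open>\<parallel>Au\<parallel>\<close> is bounded below on such unit vectors \<open>u\<close>.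
\<close>

definition sparsity_objective ::
    "real \<Rightarrow> real^'n^'m \<Rightarrow> real^'m \<Rightarrow> (real^'m \<Rightarrow> real) \<Rightarrow> real^'n \<Rightarrow> real" where
  "sparsity_objective lam A b q x = lam * (norm1 x)\<^sup>2 / (norm x)\<^sup>2 + q (A *v x - b)"

lemma closed_hyperrectangle_imp_closed:
  fixes X :: "(real^'n) set"
  assumes "closed_hyperrectangle X"
  shows "closed X"
proof -
  obtain lo hi :: "'n \<Rightarrow> ereal" where X: "X = {x. \<forall>i. lo i \<le> ereal (x$i) \<and> ereal (x$i) \<le> hi i}"
    using assms unfolding closed_hyperrectangle_def by blast
  have "continuous_on UNIV (\<lambda>x::real^'n. ereal (x$i))" for i
    by (intro continuous_intros)
  then show ?thesis
    unfolding X by (intro closed_Collect_all closed_Collect_conj closed_Collect_le continuous_on_const)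
qed

lemma norm_le_norm1: "norm x \<le> norm1 x"
  unfolding norm1_def by (rule norm_le_l1_cart)

lemma norm1_scaleR: "norm1 (c *\<^sub>R x) = \<bar>c\<bar> * norm1 x"
  unfolding norm1_def by (simp add: abs_mult sum_distrib_left)

lemma continuous_on_norm1: "continuous_on S norm1"
  unfolding norm1_def by (intro continuous_intros)

lemma norm1_power2_le_norm0: "(norm1 x)\<^sup>2 \<le> real (norm0 x) * (norm x)\<^sup>2"
proof -
  let ?S = "{i. x$i \<noteq> 0}"
  have "norm1 x = (\<Sum>i\<in>?S. \<bar>x$i\<bar>)"
    unfolding norm1_def by (rule sum.mono_neutral_right) auto
  then have "(norm1 x)\<^sup>2 \<le> (\<Sum>i\<in>?S. \<bar>x$i\<bar>\<^sup>2) * real (card ?S)"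
    by (metis sum_squared_le_sum_of_squares)
  also have "(\<Sum>i\<in>?S. \<bar>x$i\<bar>\<^sup>2) = (\<Sum>i\<in>UNIV. (x$i)\<^sup>2)"
    by (simp only: power2_abs) (rule sum.mono_neutral_left, auto)
  also have "\<dots> = (norm x)\<^sup>2"
    by (simp add: norm_vec_def L2_set_def sum_nonneg)
  finally show ?thesis
    unfolding norm0_def by (simp add: mult.commute)
qed

lemma one_le_norm1_ratio:
  assumes "x \<noteq> 0"
  shows "1 \<le> (norm1 x)\<^sup>2 / (norm x)\<^sup>2"
  using assms power_mono[OF norm_le_norm1[of x]] by simp

lemma spherical_section_property_imp_norm1_power2_ge:
  assumes "spherical_section_property m s V" "0 < s" "d \<in> V"
  shows "real m / s * (norm d)\<^sup>2 \<le> (norm1 d)\<^sup>2"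
proof (cases "d = 0")
  case False
  have "ereal (sqrt (real m / s)) \<le> (INF v\<in>V - {0}. ereal (norm1 v / norm v))"
    using assms(1) unfolding spherical_section_property_def by blast
  also have "\<dots> \<le> ereal (norm1 d / norm d)"
    using assms(3) False by (intro INF_lower) auto
  finally have "sqrt (real m / s) * norm d \<le> norm1 d"
    using False by (simp add: le_divide_eq)
  then have "(sqrt (real m / s) * norm d)\<^sup>2 \<le> (norm1 d)\<^sup>2"
    using assms(2) by (intro power_mono) auto
  then show ?thesis
    using assms(2) by (simp add: power_mult_distrib)
qed simp

lemma punctured_continuous_attains_inf:
  fixes F h :: "'a::heine_borel \<Rightarrow> real"
  assumes "closed S" and F_cont: "continuous_on (S - {a}) F" and h_cont: "isCont h a"
    and F_ge: "\<And>x. x \<in> S - {a} \<Longrightarrow> h x \<le> F x"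
    and x1: "x1 \<in> S - {a}" "F x1 < h a"
    and bounded: "bounded {x \<in> S - {a}. F x \<le> F x1}"
  shows "\<exists>x\<in>S - {a}. \<forall>y\<in>S - {a}. F x \<le> F y"
proof -
  obtain \<delta> where "\<delta> > 0" and "\<And>y. dist y a < \<delta> \<Longrightarrow> dist (h y) (h a) < h a - F x1"
    using h_cont x1(2) unfolding continuous_at_eps_delta by (meson diff_gt_0_iff_gt)
  then have h_gt: "F x1 < h y" if "dist y a < \<delta>" for y
    using that by (fastforce simp: dist_real_def)
  define K where "K = (S - ball a \<delta>) \<inter> F -` {..F x1}"
  have K_sub: "K \<subseteq> {x \<in> S - {a}. F x \<le> F x1}"
    using \<open>\<delta> > 0\<close> unfolding K_def by auto
  have "S - ball a \<delta> \<subseteq> S - {a}"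
    using \<open>\<delta> > 0\<close> by auto
  then have "closed K"
    unfolding K_def using \<open>closed S\<close>
    by (intro continuous_closed_preimage continuous_on_subset[OF F_cont] closed_Diff) auto
  then have "compact K"
    using bounded_subset[OF bounded K_sub] by (simp add: compact_eq_bounded_closed)
  have outside_K: "F x1 < F y" if "y \<in> S - {a}" "y \<notin> K" for y
  proof (cases "dist y a < \<delta>")
    case True
    then show ?thesis
      using h_gt F_ge[OF that(1)] by fastforce
  next
    case False
    then show ?thesis
      using that unfolding K_def by (auto simp: dist_commute)
  qed
  then have "x1 \<in> K"
    using x1(1) by blast
  then obtain x where "x \<in> K" and x_min: "\<forall>y\<in>K. F x \<le> F y"
    using continuous_attains_inf[OF \<open>compact K\<close>] continuous_on_subset[OF F_cont] K_sub by blast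
  have "F x \<le> F y" if "y \<in> S - {a}" for y
    using x_min \<open>x1 \<in> K\<close> outside_K[OF that] by force
  then show ?thesis
    using \<open>x \<in> K\<close> K_sub by blast
qed

lemma matrix_vector_mult_norm_lower_bound:
  fixes A :: "real^'n^'m"
  assumes spread: "\<And>d. A *v d = 0 \<Longrightarrow> \<kappa> * (norm d)\<^sup>2 \<le> (norm1 d)\<^sup>2" and "\<kappa>' < \<kappa>"
  shows "\<exists>\<mu>>0. \<forall>u. norm u = 1 \<longrightarrow> (norm1 u)\<^sup>2 \<le> \<kappa>' \<longrightarrow> \<mu> \<le> norm (A *v u)"
proof -
  define U where "U = {u :: real^'n. norm u = 1 \<and> (norm1 u)\<^sup>2 \<le> \<kappa>'}"
  show ?thesis
  proof (cases "U = {}")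
    case True
    then show ?thesis
      unfolding U_def by (intro exI[of _ 1]) auto
  next
    case False
    have "bounded U"
      unfolding U_def bounded_iff by auto
    moreover have "continuous_on UNIV (\<lambda>u. (norm1 u)\<^sup>2)"
      by (intro continuous_on_power continuous_on_norm1)
    then have "closed U"
      unfolding U_def by (intro closed_Collect_conj closed_Collect_eq closed_Collect_le
          continuous_on_norm_id continuous_on_const)
    ultimately have "compact U"
      by (simp add: compact_eq_bounded_closed)
    moreover have "continuous_on U (\<lambda>u. norm (A *v u))"
      by (intro continuous_on_norm linear_continuous_on matrix_vector_mul_bounded_linear)
    ultimately obtain u0 where "u0 \<in> U" and u0_min: "\<forall>u\<in>U. norm (A *v u0) \<le> norm (A *v u)"
      using continuous_attains_inf False by blast
    have "A *v u0 \<noteq> 0"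
      using spread[of u0] \<open>u0 \<in> U\<close> \<open>\<kappa>' < \<kappa>\<close> unfolding U_def by auto
    then show ?thesis
      using u0_min unfolding U_def by (intro exI[of _ "norm (A *v u0)"]) auto
  qed
qed

lemma bounded_sublevel_sparsity_objective:
  fixes A :: "real^'n^'m" and q :: "real^'m \<Rightarrow> real" and X :: "(real^'n) set"
  assumes "lam > 0" and coercive: "filterlim q at_top at_infinity"
    and spread: "\<And>d. A *v d = 0 \<Longrightarrow> \<kappa> * (norm d)\<^sup>2 \<le> (norm1 d)\<^sup>2"
    and q_ge: "\<And>x. x \<in> X \<Longrightarrow> qm \<le> q (A *v x - b)"
    and "c < lam * \<kappa> + qm"
  shows "bounded {x \<in> X - {0}. sparsity_objective lam A b q x \<le> c}"
proof -
  define \<kappa>' where "\<kappa>' = (c - qm) / lam"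
  have "\<kappa>' < \<kappa>"
    using assms(1,5) unfolding \<kappa>'_def by (simp add: divide_less_eq mult.commute)
  then obtain \<mu> where "\<mu> > 0" and \<mu>: "\<And>u. norm u = 1 \<Longrightarrow> (norm1 u)\<^sup>2 \<le> \<kappa>' \<Longrightarrow> \<mu> \<le> norm (A *v u)"
    using matrix_vector_mult_norm_lower_bound[OF spread] by blast
  obtain R where R: "\<And>y. R \<le> norm y \<Longrightarrow> c < q y"
    using coercive unfolding filterlim_at_top_dense eventually_at_infinity by blast
  have "norm x \<le> (R + norm b) / \<mu>"
    if x: "x \<in> X - {0}" and F: "sparsity_objective lam A b q x \<le> c" for x
  proof -
    define r where "r = (norm1 x)\<^sup>2 / (norm x)\<^sup>2"
    have lam_r: "sparsity_objective lam A b q x = lam * r + q (A *v x - b)"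
      unfolding r_def sparsity_objective_def by simp
    have "0 \<le> lam * r"
      using assms(1) unfolding r_def by simp
    then have "q (A *v x - b) \<le> c"
      using F lam_r by linarith
    then have "norm (A *v x - b) < R"
      using R by (meson not_le)
    then have Ax: "norm (A *v x) < R + norm b"
      using norm_triangle_sub[of "A *v x" b] by linarith
    have "lam * r \<le> c - qm"
      using F q_ge[of x] x lam_r by simp
    then have "r \<le> \<kappa>'"
      unfolding \<kappa>'_def using assms(1) by (simp add: le_divide_eq mult.commute)
    define u where "u = (1 / norm x) *\<^sub>R x"
    have "norm u = 1" and "(norm1 u)\<^sup>2 = r"
      unfolding u_def r_def using x by (simp_all add: norm1_scaleR power_divide)
    then have "\<mu> \<le> norm (A *v u)"
      using \<mu> \<open>r \<le> \<kappa>'\<close> by simp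
    also have "\<dots> = norm (A *v x) / norm x"
      unfolding u_def by (simp add: matrix_vector_mult_scaleR)
    finally have "\<mu> * norm x \<le> norm (A *v x)"
      using x by (simp add: le_divide_eq)
    then show ?thesis
      using Ax \<open>\<mu> > 0\<close> by (simp add: le_divide_eq mult.commute)
  qed
  then show ?thesis
    unfolding bounded_iff by blast
qed

lemma sparsity_objective_less_if_sparse:
  assumes "lam > 0" "x \<noteq> 0" "real (norm0 x) < \<kappa>"
  shows "sparsity_objective lam A b q x < lam * \<kappa> + q (A *v x - b)"
proof -
  have "(norm1 x)\<^sup>2 / (norm x)\<^sup>2 \<le> real (norm0 x)"
    using norm1_power2_le_norm0[of x] assms(2) by (simp add: divide_le_eq)
  then have "lam * ((norm1 x)\<^sup>2 / (norm x)\<^sup>2) < lam * \<kappa>"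
    using assms(1,3) by (intro mult_strict_left_mono) auto
  then show ?thesis
    unfolding sparsity_objective_def by simp
qed

lemma bounded_sublevel_sparsity_objective_at_sparse_minimiser:
  fixes A :: "real^'n^'m" and q :: "real^'m \<Rightarrow> real" and X :: "(real^'n) set"
  assumes "lam > 0" and "filterlim q at_top at_infinity"
    and "spherical_section_property CARD('m) s {x. A *v x = 0}" "s > 0"
    and "xt \<in> X - {0}" and q_min: "\<And>x. x \<in> X \<Longrightarrow> q (A *v xt - b) \<le> q (A *v x - b)"
    and "real (norm0 xt) < real CARD('m) / s"
  shows "bounded {x \<in> X - {0}. sparsity_objective lam A b q x \<le> sparsity_objective lam A b q xt}"
proof (rule bounded_sublevel_sparsity_objective[OF assms(1,2) _ q_min])
  show "real CARD('m) / s * (norm d)\<^sup>2 \<le> (norm1 d)\<^sup>2" if "A *v d = 0" for d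
    using spherical_section_property_imp_norm1_power2_ge[OF assms(3,4)] that by simp
  show "sparsity_objective lam A b q xt < lam * (real CARD('m) / s) + q (A *v xt - b)"
    using sparsity_objective_less_if_sparse assms(1,5,7) by blast
qed

lemma sparsity_objective_attains_inf:
  fixes A :: "real^'n^'m" and q :: "real^'m \<Rightarrow> real" and X :: "(real^'n) set"
  assumes "lam > 0" "continuous_on UNIV q" "closed X"
    and "x1 \<in> X - {0}" "sparsity_objective lam A b q x1 < lam + q (- b)"
    and "bounded {x \<in> X - {0}. sparsity_objective lam A b q x \<le> sparsity_objective lam A b q x1}"
  shows "\<exists>x\<in>X - {0}. \<forall>y\<in>X - {0}. sparsity_objective lam A b q x \<le> sparsity_objective lam A b q y"
proof -
  have "continuous_on S (\<lambda>x. A *v x - b)" for S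
    by (intro continuous_on_diff linear_continuous_on matrix_vector_mul_bounded_linear
        continuous_on_const)
  then have q_affine_cont: "continuous_on S (\<lambda>x. q (A *v x - b))" for S
    using continuous_on_compose2[OF assms(2)] by blast
  show ?thesis
  proof (rule punctured_continuous_attains_inf[where h = "\<lambda>x. lam + q (A *v x - b)"])
    show "continuous_on (X - {0}) (sparsity_objective lam A b q)"
      unfolding sparsity_objective_def[abs_def]
      by (intro continuous_intros continuous_on_norm1 q_affine_cont) auto
    show "isCont (\<lambda>x. lam + q (A *v x - b)) 0"
      using q_affine_cont[of UNIV] by (simp add: continuous_on_eq_continuous_at continuous_intros)
    show "lam + q (A *v x - b) \<le> sparsity_objective lam A b q x" if "x \<in> X - {0}" for x
      using mult_left_mono[OF one_le_norm1_ratio, of x lam] that assms(1)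
      unfolding sparsity_objective_def by simp
  qed (use assms(3-6) in auto)
qed

theorem theorem3p1:
  fixes lam :: real
    and A :: "real^'n^'m"
    and b :: "real^'m"
    and q1 q2 :: "real^'m \<Rightarrow> real"
    and g :: "real^'m \<Rightarrow> real^'m"
    and X :: "(real^'n) set"
  assumes lam_pos: "lam > 0"
    and mn: "CARD('m) < CARD('n)"
    and kerdim: "dim {x. A *v x = 0} = CARD('n) - CARD('m)"
    and q1_diff: "\<And>y. (q1 has_derivative (\<lambda>h. g y \<bullet> h)) (at y)"
    and g_cont: "continuous_on UNIV g"
    and g_lip: "\<exists>L. \<forall>y z. norm (g y - g z) \<le> L * norm (y - z)"
    and q2_convex: "convex_on UNIV q2"
    and q2_cont: "continuous_on UNIV q2"
    and q_nonneg: "\<And>y. q1 y - q2 y \<ge> 0"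
    and X_rect: "closed_hyperrectangle X"
    and X0: "0 \<in> X"
    and standing: "(INF x\<in>X - {0}. ereal (lam * (norm1 x)\<^sup>2 / (norm x)\<^sup>2 + (q1 (A *v x - b) - q2 (A *v x - b))))
                     < ereal (lam + (q1 (- b) - q2 (- b)))"
    and cases: "bounded X \<or>
       (filterlim (\<lambda>y. q1 y - q2 y) at_top at_infinity \<and>
        (\<exists>s>0. spherical_section_property CARD('m) s {x. A *v x = 0} \<and>
           (\<exists>xt. xt \<noteq> 0 \<and> xt \<in> X \<and>
                 (\<forall>x\<in>X. q1 (A *v xt - b) - q2 (A *v xt - b) \<le> q1 (A *v x - b) - q2 (A *v x - b)) \<and>
                 real (norm0 xt) < real CARD('m) / s)))"
  shows "\<exists>x\<in>X - {0}. ereal (lam * (norm1 x)\<^sup>2 / (norm x)\<^sup>2 + (q1 (A *v x - b) - q2 (A *v x - b)))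
            = (INF x\<in>X - {0}. ereal (lam * (norm1 x)\<^sup>2 / (norm x)\<^sup>2 + (q1 (A *v x - b) - q2 (A *v x - b))))"
proof -
  define q where "q y = q1 y - q2 y" for y
  define \<Phi> where "\<Phi> = sparsity_objective lam A b q"
  have q_cont: "continuous_on UNIV q"
    unfolding q_def using has_derivative_continuous_on[OF q1_diff] q2_cont
    by (intro continuous_on_diff)
  obtain x0 where x0: "x0 \<in> X - {0}" "\<Phi> x0 < lam + q (- b)"
    using standing by (auto simp: INF_less_iff \<Phi>_def q_def sparsity_objective_def)
  consider (bounded) "bounded X"
    | (sparse) s xt where "filterlim q at_top at_infinity" "s > 0"
        "spherical_section_property CARD('m) s {x. A *v x = 0}" "xt \<in> X - {0}"
        "\<And>x. x \<in> X \<Longrightarrow> q (A *v xt - b) \<le> q (A *v x - b)" "real (norm0 xt) < real CARD('m) / s"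
    using cases unfolding q_def[abs_def] by blast
  then have "\<exists>x1\<in>X - {0}. \<Phi> x1 < lam + q (- b) \<and> bounded {x \<in> X - {0}. \<Phi> x \<le> \<Phi> x1}"
  proof cases
    case bounded
    then show ?thesis
      using x0 by (blast intro: bounded_subset)
  next
    case (sparse s xt)
    then have bounded_xt: "bounded {x \<in> X - {0}. \<Phi> x \<le> \<Phi> xt}"
      unfolding \<Phi>_def using lam_pos by (intro bounded_sublevel_sparsity_objective_at_sparse_minimiser)
    show ?thesis
    proof (cases "\<Phi> x0 \<le> \<Phi> xt")
      case True
      then show ?thesis
        using x0 by (intro bexI[OF _ x0(1)] conjI bounded_subset[OF bounded_xt]) auto
    next
      case False
      then show ?thesis
        using x0 \<open>xt \<in> X - {0}\<close> bounded_xt by (intro bexI[OF _ \<open>xt \<in> X - {0}\<close>]) auto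
    qed
  qed
  then obtain x where x: "x \<in> X - {0}" "\<forall>y\<in>X - {0}. \<Phi> x \<le> \<Phi> y"
    unfolding \<Phi>_def using sparsity_objective_attains_inf[OF lam_pos q_cont
        closed_hyperrectangle_imp_closed[OF X_rect]] by blast
  then have "ereal (\<Phi> x) = (INF y\<in>X - {0}. ereal (\<Phi> y))"
    by (intro antisym INF_greatest INF_lower) auto
  then show ?thesis
    using x(1) unfolding \<Phi>_def sparsity_objective_def q_def by blast
qed

end
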